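(* For the finite-alphabet cognitive MAC $P_{Y|X_1,X_2}$ with the matched metric $q(x_1,x_2,y)=\log P_{Y|X_1,X_2}(y|x_1,x_2)$, one has $\mathcal R^{sup}_{cog}=\mathcal R^{bin}_{cog}=\mathcal R^{match}_{cog}$, where $$\mathcal R^{match}_{cog}=\bigcup_{P_{X_1,X_2}}\{(R_1,R_2): R_2\le I_P(X_2;Y|X_1),\ R_1+R_2\le I_P(X_1,X_2;Y)\},\quad P=P_{X_1,X_2}P_{Y|X_1,X_2};$$ $\mathcal R^{sup}_{cog}$ is the closure of the convex hull of $\bigcup_P\tilde{\mathcal R}^{sup}_{cog}(P)$ with $\tilde{\mathcal R}^{sup}_{cog}(P)=\{(R_1,R_2):R_2\le\min_{\tilde P\in\mathcal L_2(P)}I_{\tilde P}(X_2;Y|X_1),\ R_1+R_2\le\min_{\tilde P\in\mathcal L_0(P):I_{\tilde P}(X_1;Y)\le R_1}I_{\tilde P}(X_1,X_2;Y)\}$; and $\mathcal R^{bin}_{cog}$ is the closure of the convex hull of $\bigcup_P\mathcal R^{bin,*}_{cog}(P)$, $\mathcal R^{bin,*}_{cog}(P)$ being the set of $(R_1,R_2)$ for which there exist $R_{1,a},R_{1,b}\ge0$ with $R_1=R_{1,a}+R_{1,b}$, $R_{1,a}\le R_1'(P)$, $R_{1,b}+R_2\le R_2'(P)$, and either $R_{1,a}\le R_1''(P,R_{1,b}+R_2)$ or $R_{1,b}+R_2\le R_2''(P,R_{1,a})$ (all unions over $P=P_{X_1,X_2}P_{Y|X_1,X_2}$).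
   Context: For a distribution $Q$ on $\mathcal X_1\times\mathcal X_2\times\mathcal Y$: $\mathcal G_q(Q)=\{f: f_{X_1,X_2}=Q_{X_1,X_2},\ \mathbb E_f q(X_1,X_2,Y)\ge\mathbb E_Q q(X_1,X_2,Y)\}$; $\mathcal L_1(Q)=\{f\in\mathcal G_q(Q):f_{X_2,Y}=Q_{X_2,Y}\}$; $\mathcal L_2(Q)=\{f\in\mathcal G_q(Q):f_{X_1,Y}=Q_{X_1,Y}\}$; $\mathcal L_0(Q)=\{f\in\mathcal G_q(Q):f_Y=Q_Y\}$. $R_1'(P)=\min_{\tilde P\in\mathcal L_1(P)}I_{\tilde P}(X_1;Y,X_2)$; $R_2'(P)=\min_{\tilde P\in\mathcal L_2(P)}I_{\tilde P}(X_2;Y|X_1)$; $R_1''(P,R_2)=\min_{\tilde P\in\mathcal L_0(P)}[I_{\tilde P}(X_1;Y)+|I_{\tilde P}(X_2;Y|X_1)-R_2|^+]$; $R_2''(P,R_1)=\min_{\tilde P\in\mathcal L_0(P)}[I_{\tilde P}(X_2;Y)-I_{\tilde P}(X_2;X_1)+|I_{\tilde P}(X_1;Y,X_2)-R_1|^+]$; $|t|^+=\max\{0,t\}$. *)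

theory Defs
  imports "HOL-Analysis.Analysis"
begin

text \<open>Finite alphabets are finite types: X1 :: 'a, X2 :: 'b, Y :: 'c.
  Information quantities are in nats (natural log); metrics are ereal-valued
  so that the matched metric log W can take the value -infinity.\<close>

definition is_pmf2 :: "('a::finite \<Rightarrow> 'b::finite \<Rightarrow> real) \<Rightarrow> bool" where
  "is_pmf2 p \<longleftrightarrow> (\<forall>x1 x2. 0 \<le> p x1 x2) \<and> (\<Sum>x1\<in>UNIV. \<Sum>x2\<in>UNIV. p x1 x2) = 1"

definition is_pmf3 :: "('a::finite \<Rightarrow> 'b::finite \<Rightarrow> 'c::finite \<Rightarrow> real) \<Rightarrow> bool" where
  "is_pmf3 f \<longleftrightarrow> (\<forall>x1 x2 y. 0 \<le> f x1 x2 y) \<and> (\<Sum>x1\<in>UNIV. \<Sum>x2\<in>UNIV. \<Sum>y\<in>UNIV. f x1 x2 y) = 1"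

definition is_channel :: "('a::finite \<Rightarrow> 'b::finite \<Rightarrow> 'c::finite \<Rightarrow> real) \<Rightarrow> bool" where
  "is_channel W \<longleftrightarrow> (\<forall>x1 x2 y. 0 \<le> W x1 x2 y) \<and> (\<forall>x1 x2. (\<Sum>y\<in>UNIV. W x1 x2 y) = 1)"

definition joint :: "('a::finite \<Rightarrow> 'b::finite \<Rightarrow> real) \<Rightarrow> ('a \<Rightarrow> 'b \<Rightarrow> 'c::finite \<Rightarrow> real)
    \<Rightarrow> 'a \<Rightarrow> 'b \<Rightarrow> 'c \<Rightarrow> real" where
  "joint PX W = (\<lambda>x1 x2 y. PX x1 x2 * W x1 x2 y)"

definition m12 :: "('a::finite \<Rightarrow> 'b::finite \<Rightarrow> 'c::finite \<Rightarrow> real) \<Rightarrow> 'a \<Rightarrow> 'b \<Rightarrow> real" where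
  "m12 f x1 x2 = (\<Sum>y\<in>UNIV. f x1 x2 y)"
definition m13 :: "('a::finite \<Rightarrow> 'b::finite \<Rightarrow> 'c::finite \<Rightarrow> real) \<Rightarrow> 'a \<Rightarrow> 'c \<Rightarrow> real" where
  "m13 f x1 y = (\<Sum>x2\<in>UNIV. f x1 x2 y)"
definition m23 :: "('a::finite \<Rightarrow> 'b::finite \<Rightarrow> 'c::finite \<Rightarrow> real) \<Rightarrow> 'b \<Rightarrow> 'c \<Rightarrow> real" where
  "m23 f x2 y = (\<Sum>x1\<in>UNIV. f x1 x2 y)"
definition m1 :: "('a::finite \<Rightarrow> 'b::finite \<Rightarrow> 'c::finite \<Rightarrow> real) \<Rightarrow> 'a \<Rightarrow> real" where
  "m1 f x1 = (\<Sum>x2\<in>UNIV. \<Sum>y\<in>UNIV. f x1 x2 y)"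
definition m3 :: "('a::finite \<Rightarrow> 'b::finite \<Rightarrow> 'c::finite \<Rightarrow> real) \<Rightarrow> 'c \<Rightarrow> real" where
  "m3 f y = (\<Sum>x1\<in>UNIV. \<Sum>x2\<in>UNIV. f x1 x2 y)"

text \<open>Expectation of a metric q under f (ereal; 0 * -inf = 0).\<close>
definition expect :: "('a::finite \<Rightarrow> 'b::finite \<Rightarrow> 'c::finite \<Rightarrow> ereal)
    \<Rightarrow> ('a \<Rightarrow> 'b \<Rightarrow> 'c \<Rightarrow> real) \<Rightarrow> ereal" where
  "expect q f = (\<Sum>x1\<in>UNIV. \<Sum>x2\<in>UNIV. \<Sum>y\<in>UNIV. ereal (f x1 x2 y) * q x1 x2 y)"

definition qmatch :: "('a \<Rightarrow> 'b \<Rightarrow> 'c \<Rightarrow> real) \<Rightarrow> 'a \<Rightarrow> 'b \<Rightarrow> 'c \<Rightarrow> ereal" where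
  "qmatch W x1 x2 y = (if 0 < W x1 x2 y then ereal (ln (W x1 x2 y)) else -\<infinity>)"

definition Gq :: "('a::finite \<Rightarrow> 'b::finite \<Rightarrow> 'c::finite \<Rightarrow> ereal)
    \<Rightarrow> ('a \<Rightarrow> 'b \<Rightarrow> 'c \<Rightarrow> real) \<Rightarrow> ('a \<Rightarrow> 'b \<Rightarrow> 'c \<Rightarrow> real) set" where
  "Gq q Q = {f. is_pmf3 f \<and> m12 f = m12 Q \<and> expect q f \<ge> expect q Q}"

definition L1 where "L1 q Q = {f \<in> Gq q Q. m23 f = m23 Q}"
definition L2 where "L2 q Q = {f \<in> Gq q Q. m13 f = m13 Q}"
definition L0 where "L0 q Q = {f \<in> Gq q Q. m3 f = m3 Q}"

definition mi :: "('u::finite \<Rightarrow> 'v::finite \<Rightarrow> real) \<Rightarrow> real" where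
  "mi g = (\<Sum>u\<in>UNIV. \<Sum>v\<in>UNIV. if 0 < g u v
      then g u v * ln (g u v / ((\<Sum>v'\<in>UNIV. g u v') * (\<Sum>u'\<in>UNIV. g u' v))) else 0)"

definition I_X1_YX2 :: "('a::finite \<Rightarrow> 'b::finite \<Rightarrow> 'c::finite \<Rightarrow> real) \<Rightarrow> real" where
  "I_X1_YX2 f = mi (\<lambda>x1 (p::'b\<times>'c). f x1 (fst p) (snd p))"
definition I_X12_Y :: "('a::finite \<Rightarrow> 'b::finite \<Rightarrow> 'c::finite \<Rightarrow> real) \<Rightarrow> real" where
  "I_X12_Y f = mi (\<lambda>(p::'a\<times>'b) y. f (fst p) (snd p) y)"
definition I_X1_Y :: "('a::finite \<Rightarrow> 'b::finite \<Rightarrow> 'c::finite \<Rightarrow> real) \<Rightarrow> real" where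
  "I_X1_Y f = mi (m13 f)"
definition I_X2_Y :: "('a::finite \<Rightarrow> 'b::finite \<Rightarrow> 'c::finite \<Rightarrow> real) \<Rightarrow> real" where
  "I_X2_Y f = mi (m23 f)"
definition I_X2_X1 :: "('a::finite \<Rightarrow> 'b::finite \<Rightarrow> 'c::finite \<Rightarrow> real) \<Rightarrow> real" where
  "I_X2_X1 f = mi (\<lambda>x2 x1. m12 f x1 x2)"
definition I_X2_Y_X1 :: "('a::finite \<Rightarrow> 'b::finite \<Rightarrow> 'c::finite \<Rightarrow> real) \<Rightarrow> real" where
  "I_X2_Y_X1 f = (\<Sum>x1\<in>UNIV. \<Sum>x2\<in>UNIV. \<Sum>y\<in>UNIV. if 0 < f x1 x2 y
      then f x1 x2 y * ln (f x1 x2 y * m1 f x1 / (m12 f x1 x2 * m13 f x1 y)) else 0)"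

text \<open>Minima are taken as infima in ereal (inf of empty set = +infinity).\<close>
definition R1' where "R1' q P = (INF f\<in>L1 q P. ereal (I_X1_YX2 f))"
definition R2' where "R2' q P = (INF f\<in>L2 q P. ereal (I_X2_Y_X1 f))"
definition R1'' where "R1'' q P R2 =
  (INF f\<in>L0 q P. ereal (I_X1_Y f + max 0 (I_X2_Y_X1 f - R2)))"
definition R2'' where "R2'' q P R1 =
  (INF f\<in>L0 q P. ereal (I_X2_Y f - I_X2_X1 f + max 0 (I_X1_YX2 f - R1)))"

definition R_match :: "('a::finite \<Rightarrow> 'b::finite \<Rightarrow> 'c::finite \<Rightarrow> real) \<Rightarrow> (real \<times> real) set" where
  "R_match W = (\<Union>PX\<in>{PX. is_pmf2 PX}. {(R1, R2). 0 \<le> R1 \<and> 0 \<le> R2 \<and>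
      R2 \<le> I_X2_Y_X1 (joint PX W) \<and> R1 + R2 \<le> I_X12_Y (joint PX W)})"

definition Rsup_tilde :: "('a::finite \<Rightarrow> 'b::finite \<Rightarrow> 'c::finite \<Rightarrow> ereal)
    \<Rightarrow> ('a \<Rightarrow> 'b \<Rightarrow> 'c \<Rightarrow> real) \<Rightarrow> (real \<times> real) set" where
  "Rsup_tilde q P = {(R1, R2). 0 \<le> R1 \<and> 0 \<le> R2 \<and>
      ereal R2 \<le> (INF f\<in>L2 q P. ereal (I_X2_Y_X1 f)) \<and>
      ereal (R1 + R2) \<le> (INF f\<in>{f \<in> L0 q P. I_X1_Y f \<le> R1}. ereal (I_X12_Y f))}"

definition R_sup :: "('a::finite \<Rightarrow> 'b::finite \<Rightarrow> 'c::finite \<Rightarrow> ereal)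
    \<Rightarrow> ('a \<Rightarrow> 'b \<Rightarrow> 'c \<Rightarrow> real) \<Rightarrow> (real \<times> real) set" where
  "R_sup q W = closure (convex hull (\<Union>PX\<in>{PX. is_pmf2 PX}. Rsup_tilde q (joint PX W)))"

definition Rbin_star :: "('a::finite \<Rightarrow> 'b::finite \<Rightarrow> 'c::finite \<Rightarrow> ereal)
    \<Rightarrow> ('a \<Rightarrow> 'b \<Rightarrow> 'c \<Rightarrow> real) \<Rightarrow> (real \<times> real) set" where
  "Rbin_star q P = {(R1, R2). 0 \<le> R1 \<and> 0 \<le> R2 \<and>
      (\<exists>R1a R1b. 0 \<le> R1a \<and> 0 \<le> R1b \<and> R1 = R1a + R1b \<and>
         ereal R1a \<le> R1' q P \<and> ereal (R1b + R2) \<le> R2' q P \<and>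
         (ereal R1a \<le> R1'' q P (R1b + R2) \<or> ereal (R1b + R2) \<le> R2'' q P R1a))}"

definition R_bin :: "('a::finite \<Rightarrow> 'b::finite \<Rightarrow> 'c::finite \<Rightarrow> ereal)
    \<Rightarrow> ('a \<Rightarrow> 'b \<Rightarrow> 'c \<Rightarrow> real) \<Rightarrow> (real \<times> real) set" where
  "R_bin q W = closure (convex hull (\<Union>PX\<in>{PX. is_pmf2 PX}. Rbin_star q (joint PX W)))"

end

theory Submission
  imports Defs "HOL-Real_Asymp.Real_Asymp"
begin

text \<open>With the matched metric q = log W, every f in G_q(P) satisfies
  E_f log W \<ge> E_P log W; hence f is supported where W > 0, and Gibbs' inequality
  D(f || P_{X1,X2} W) \<ge> 0 yields H(f) \<le> H(P). Each of L_0, L_1, L_2 fixes two marginals,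
  and the mutual information minimized over it is a difference of marginal entropies and H(f),
  so each of these minima is attained at f = P. By the chain rules
  I(X1,X2;Y) = I(X1;Y) + I(X2;Y|X1) = I(X2;Y) - I(X2;X1) + I(X1;Y,X2), both the superposition
  and the binning regions for P then coincide with the matched region for P. Finally the
  matched region is already closed and convex: up to a term linear in P_{X1,X2},
  I(X2;Y|X1) and I(X1,X2;Y) are conditional and unconditional output entropies, which are
  concave, and the region is the projection of a compact set over the probability simplex.\<close>

definition kl_term :: "real \<Rightarrow> real \<Rightarrow> real" where
  "kl_term a A = (if 0 < a then a * ln (a / A) else 0)"

lemma kl_term_lower_bound:
  assumes "0 \<le> a" "0 \<le> A" "0 < a \<Longrightarrow> 0 < A" "0 < s" "0 < S"
  shows "a - A * s / S + a * ln (s / S) \<le> kl_term a A"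
proof (cases "a > 0")
  case True
  hence A: "A > 0" using assms by auto
  have "1 - 1/(a * S / (A * s)) \<le> ln (a * S / (A * s))"
    using ln_le_minus_one[of "1 / (a * S / (A * s))"] True A assms by (simp add: ln_div)
  hence "a * (1 - (A * s) / (a * S)) \<le> a * ln (a * S / (A * s))" using True
    by (simp add: mult_left_mono)
  also have "a * (1 - (A * s) / (a * S)) = a - A * s / S" using True assms by (simp add: field_simps)
  finally have 1: "a - A * s / S \<le> a * ln (a * S / (A * s))" .
  have "ln (a/A) = ln (a * S / (A * s)) + ln (s/S)"
    using True A assms by (simp add: ln_divide_pos ln_mult)
  hence "a * ln (a/A) = a * ln (a * S / (A * s)) + a * ln (s/S)"
    by (simp only: distrib_left)
  thus ?thesis using 1 True by (simp add: kl_term_def)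
next
  case False
  hence "a = 0" using assms by auto
  thus ?thesis using assms by (simp add: kl_term_def)
qed

text \<open>Apply the lower bound above with s and S the two totals.\<close>
lemma log_sum_inequality:
  assumes "finite I" "\<And>i. i \<in> I \<Longrightarrow> 0 \<le> a i" "\<And>i. i \<in> I \<Longrightarrow> 0 \<le> A i"
    "\<And>i. i \<in> I \<Longrightarrow> 0 < a i \<Longrightarrow> 0 < A i"
  shows "kl_term (\<Sum>i\<in>I. a i) (\<Sum>i\<in>I. A i) \<le> (\<Sum>i\<in>I. kl_term (a i) (A i))"
proof (cases "(\<Sum>i\<in>I. a i) > 0")
  case False
  hence "\<forall>i\<in>I. a i = 0" using assms sum_nonneg_eq_0_iff[of I a] by (metis order_less_le sum_nonneg)
  thus ?thesis using False by (simp add: kl_term_def)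
next
  case True
  define s where "s = (\<Sum>i\<in>I. a i)"
  define S where "S = (\<Sum>i\<in>I. A i)"
  obtain j where j: "j \<in> I" "a j > 0" using True
    by (metis not_less order.refl sum_nonpos)
  have "A j \<le> S" unfolding S_def using assms j by (intro member_le_sum) auto
  hence S: "S > 0" using assms j by force
  have s: "s > 0" using True s_def by simp
  have "(\<Sum>i\<in>I. a i - A i * s / S + a i * ln (s / S)) \<le> (\<Sum>i\<in>I. kl_term (a i) (A i))"
    by (intro sum_mono kl_term_lower_bound) (use assms s S in auto)
  also have "(\<Sum>i\<in>I. a i - A i * s / S + a i * ln (s / S)) = s - S * s / S + s * ln (s/S)"
    unfolding s_def S_def by (simp add: sum.distrib sum_subtractf sum_distrib_right sum_divide_distrib)
  also have "\<dots> = kl_term s S" using s S by (simp add: kl_term_def)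
  finally show ?thesis unfolding s_def S_def .
qed

lemma kl_term_scale: "0 \<le> l \<Longrightarrow> kl_term (l * a) (l * A) = l * kl_term a A"
  by (cases "l = 0") (auto simp: kl_term_def zero_less_mult_iff)

lemma log_sum_inequality_two:
  assumes "0 \<le> a" "0 \<le> b" "0 \<le> A" "0 \<le> B" "0 < a \<Longrightarrow> 0 < A" "0 < b \<Longrightarrow> 0 < B"
  shows "kl_term (a + b) (A + B) \<le> kl_term a A + kl_term b B"
proof -
  have "kl_term (\<Sum>i\<in>{True, False}. if i then a else b) (\<Sum>i\<in>{True, False}. if i then A else B)
     \<le> (\<Sum>i\<in>{True, False}. kl_term (if i then a else b) (if i then A else B))"
    by (rule log_sum_inequality) (use assms in auto)
  thus ?thesis by simp
qed

lemma xlnx_convex: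
  fixes a b u v :: real
  assumes "0 \<le> a" "0 \<le> b" "0 \<le> u" "0 \<le> v" "u + v = 1"
  shows "(u * a + v * b) * ln (u * a + v * b) \<le> u * (a * ln a) + v * (b * ln b)"
proof -
  have "kl_term (u * a + v * b) (u * 1 + v * 1) \<le> kl_term (u * a) (u * 1) + kl_term (v * b) (v * 1)"
    by (rule log_sum_inequality_two) (use assms in \<open>auto simp: zero_less_mult_iff\<close>)
  moreover have "kl_term x 1 = x * ln x" if "0 \<le> x" for x
    using that by (auto simp: kl_term_def)
  ultimately show ?thesis using assms by (simp only: kl_term_scale) simp
qed

lemma tendsto_xlnx_0: "((\<lambda>x::real. x * ln x) \<longlongrightarrow> 0) (at 0)"
proof -
  have right: "((\<lambda>x::real. x * ln x) \<longlongrightarrow> 0) (at_right 0)" by real_asymp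
  have "((\<lambda>x::real. - ((- x) * ln (- x))) \<longlongrightarrow> - 0) (at_left 0)"
    using right by (intro tendsto_minus) (simp add: filterlim_at_left_to_right comp_def)
  hence "((\<lambda>x::real. x * ln x) \<longlongrightarrow> 0) (at_left 0)" by (simp add: ln_minus)
  with right show ?thesis by (simp add: filterlim_split_at)
qed

lemma isCont_xlnx: "isCont (\<lambda>x::real. x * ln x) x"
proof (cases "x = 0")
  case True thus ?thesis using tendsto_xlnx_0 by (simp add: isCont_def)
next
  case False thus ?thesis by (intro continuous_intros) auto
qed

lemma continuous_on_xlnx [continuous_intros]:
  "continuous_on s f \<Longrightarrow> continuous_on s (\<lambda>x. f x * ln (f x :: real))"
  using continuous_on_compose2[of UNIV "\<lambda>x. x * ln x" s f] isCont_xlnx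
  by (auto intro: continuous_at_imp_continuous_on)

lemma sum_UNIV_pair:
  "(\<Sum>p\<in>(UNIV::('a::finite \<times> 'b::finite) set). F p) = (\<Sum>a\<in>UNIV. \<Sum>b\<in>UNIV. F (a, b))"
  by (subst sum.cartesian_product) (simp add: UNIV_Times_UNIV)

lemma sum_UNIV_triple:
  "(\<Sum>p\<in>(UNIV::('a::finite \<times> 'b::finite \<times> 'c::finite) set). F p)
   = (\<Sum>a\<in>UNIV. \<Sum>b\<in>UNIV. \<Sum>c\<in>UNIV. F (a, b, c))"
  by (simp add: sum_UNIV_pair)

lemma member_le_sum_UNIV:
  fixes g :: "'a::finite \<Rightarrow> real"
  assumes "\<And>j. 0 \<le> g j"
  shows "g i \<le> (\<Sum>j\<in>UNIV. g j)"
  using member_le_sum[of i UNIV g] assms by auto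

lemma mi_eq_xlnx_sums:
  fixes g :: "'u::finite \<Rightarrow> 'v::finite \<Rightarrow> real"
  assumes nn: "\<And>u v. 0 \<le> g u v"
  shows "mi g = (\<Sum>u\<in>UNIV. \<Sum>v\<in>UNIV. g u v * ln (g u v))
     - (\<Sum>u\<in>UNIV. (\<Sum>v\<in>UNIV. g u v) * ln (\<Sum>v\<in>UNIV. g u v))
     - (\<Sum>v\<in>UNIV. (\<Sum>u\<in>UNIV. g u v) * ln (\<Sum>u\<in>UNIV. g u v))"
proof -
  define r where "r u = (\<Sum>v\<in>UNIV. g u v)" for u
  define c where "c v = (\<Sum>u\<in>UNIV. g u v)" for v
  have rg: "g u v \<le> r u" for u v unfolding r_def by (rule member_le_sum_UNIV) (rule nn)
  have cg: "g u v \<le> c v" for u v unfolding c_def by (rule member_le_sum_UNIV[of "\<lambda>u. g u v"]) (rule nn)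
  have summand: "(if 0 < g u v then g u v * ln (g u v / ((\<Sum>v'\<in>UNIV. g u v') * (\<Sum>u'\<in>UNIV. g u' v))) else 0)
      = g u v * ln (g u v) - g u v * ln (r u) - g u v * ln (c v)" for u v
  proof (cases "0 < g u v")
    case True
    hence "0 < r u" "0 < c v" using rg[of u v] cg[of u v] by linarith+
    thus ?thesis using True by (simp add: r_def[symmetric] c_def[symmetric] ln_divide_pos ln_mult algebra_simps)
  next
    case False
    hence "g u v = 0" using nn[of u v] by linarith
    thus ?thesis by simp
  qed
  have "mi g = (\<Sum>u\<in>UNIV. \<Sum>v\<in>UNIV. g u v * ln (g u v)) - (\<Sum>u\<in>UNIV. \<Sum>v\<in>UNIV. g u v * ln (r u))
       - (\<Sum>u\<in>UNIV. \<Sum>v\<in>UNIV. g u v * ln (c v))"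
    unfolding mi_def summand by (simp add: sum_subtractf)
  also have "(\<Sum>u\<in>UNIV. \<Sum>v\<in>UNIV. g u v * ln (r u)) = (\<Sum>u\<in>UNIV. r u * ln (r u))"
    by (simp add: r_def sum_distrib_right)
  also have "(\<Sum>u\<in>UNIV. \<Sum>v\<in>UNIV. g u v * ln (c v)) = (\<Sum>v\<in>UNIV. c v * ln (c v))"
    by (subst sum.swap) (simp add: c_def sum_distrib_right)
  finally show ?thesis by (simp add: r_def c_def)
qed

lemma mi_lower_bound:
  fixes g :: "'u::finite \<Rightarrow> 'v::finite \<Rightarrow> real"
  assumes nn: "\<And>u v. 0 \<le> g u v"
  shows "- ((\<Sum>u\<in>UNIV. \<Sum>v\<in>UNIV. g u v) * ln (\<Sum>u\<in>UNIV. \<Sum>v\<in>UNIV. g u v)) \<le> mi g"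
proof -
  define r where "r u = (\<Sum>v\<in>UNIV. g u v)" for u
  define c where "c v = (\<Sum>u\<in>UNIV. g u v)" for v
  define t where "t = (\<Sum>u\<in>UNIV. \<Sum>v\<in>UNIV. g u v)"
  have rg: "g u v \<le> r u" for u v unfolding r_def by (rule member_le_sum_UNIV) (rule nn)
  have cg: "g u v \<le> c v" for u v unfolding c_def by (rule member_le_sum_UNIV[of "\<lambda>u. g u v"]) (rule nn)
  have r0: "0 \<le> r u" for u using rg[of u] nn by (meson order.trans)
  have c0: "0 \<le> c v" for v using cg[of _ v] nn by (meson order.trans)
  have rt: "r u \<le> t" for u unfolding t_def r_def[symmetric] by (rule member_le_sum_UNIV) (rule r0)
  show ?thesis
  proof (cases "t = 0")
    case True
    hence "g u v = 0" for u v using rg[of u v] rt[of u] nn[of u v] by linarith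
    thus ?thesis by (simp add: mi_def)
  next
    case False
    hence tpos: "t > 0" using rt[of undefined] r0[of undefined] by linarith
    text \<open>The reference measure is the product of the marginals, rescaled to total mass t.\<close>
    define h where "h u v = r u * c v / t" for u v
    have kl: "kl_term (g u v) (h u v)
        = (if 0 < g u v then g u v * ln (g u v / (r u * c v)) else 0) + g u v * ln t" for u v
    proof (cases "0 < g u v")
      case True
      hence "0 < r u" "0 < c v" using rg[of u v] cg[of u v] by linarith+
      thus ?thesis using True tpos by (simp add: kl_term_def h_def ln_divide_pos ln_mult algebra_simps)
    qed (use nn[of u v] in \<open>simp add: kl_term_def\<close>)
    have "kl_term (\<Sum>p\<in>UNIV. g (fst p) (snd p)) (\<Sum>p\<in>UNIV. h (fst p) (snd p))
        \<le> (\<Sum>p\<in>UNIV. kl_term (g (fst p) (snd p)) (h (fst p) (snd p)))"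
    proof (rule log_sum_inequality)
      fix p :: "'u \<times> 'v" assume "0 < g (fst p) (snd p)"
      thus "0 < h (fst p) (snd p)" unfolding h_def
        using rg[of "fst p" "snd p"] cg[of "fst p" "snd p"] tpos by simp
    qed (auto simp: nn h_def intro!: divide_nonneg_pos mult_nonneg_nonneg r0 c0 tpos)
    moreover have "(\<Sum>p\<in>UNIV. h (fst p) (snd p)) = t"
    proof -
      have "(\<Sum>u\<in>UNIV. r u) = t" "(\<Sum>v\<in>UNIV. c v) = t"
        unfolding t_def r_def c_def by (rule refl, rule sum.swap)
      thus ?thesis unfolding sum_UNIV_pair h_def using tpos
        by (simp add: sum_divide_distrib[symmetric] sum_distrib_left[symmetric] sum_distrib_right[symmetric])
    qed
    moreover have "(\<Sum>p\<in>UNIV. g (fst p) (snd p)) = t" unfolding sum_UNIV_pair t_def by simp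
    moreover have "(\<Sum>p\<in>UNIV. kl_term (g (fst p) (snd p)) (h (fst p) (snd p))) = mi g + t * ln t"
      unfolding sum_UNIV_pair fst_conv snd_conv kl mi_def r_def c_def
      by (simp add: sum.distrib t_def sum_distrib_right)
    ultimately show ?thesis using tpos by (simp add: kl_term_def t_def)
  qed
qed

definition m2 :: "('a::finite \<Rightarrow> 'b::finite \<Rightarrow> 'c::finite \<Rightarrow> real) \<Rightarrow> 'b \<Rightarrow> real" where
  "m2 f x2 = (\<Sum>x1\<in>UNIV. \<Sum>y\<in>UNIV. f x1 x2 y)"

definition nent :: "('a::finite \<Rightarrow> 'b::finite \<Rightarrow> 'c::finite \<Rightarrow> real) \<Rightarrow> real" where
  "nent f = (\<Sum>x1\<in>UNIV. \<Sum>x2\<in>UNIV. \<Sum>y\<in>UNIV. f x1 x2 y * ln (f x1 x2 y))"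

definition "nent12 f = (\<Sum>x1\<in>UNIV. \<Sum>x2\<in>UNIV. m12 f x1 x2 * ln (m12 f x1 x2))"
definition "nent13 f = (\<Sum>x1\<in>UNIV. \<Sum>y\<in>UNIV. m13 f x1 y * ln (m13 f x1 y))"
definition "nent23 f = (\<Sum>x2\<in>UNIV. \<Sum>y\<in>UNIV. m23 f x2 y * ln (m23 f x2 y))"
definition "nent1 f = (\<Sum>x1\<in>UNIV. m1 f x1 * ln (m1 f x1))"
definition "nent2 f = (\<Sum>x2\<in>UNIV. m2 f x2 * ln (m2 f x2))"
definition "nent3 f = (\<Sum>y\<in>UNIV. m3 f y * ln (m3 f y))"

lemma m1_eq_sum_m12: "m1 f x1 = (\<Sum>x2\<in>UNIV. m12 f x1 x2)" by (simp add: m1_def m12_def)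
lemma m1_eq_sum_m13: "m1 f x1 = (\<Sum>y\<in>UNIV. m13 f x1 y)" unfolding m1_def m13_def by (rule sum.swap)
lemma m2_eq_sum_m12: "m2 f x2 = (\<Sum>x1\<in>UNIV. m12 f x1 x2)" by (simp add: m2_def m12_def)
lemma m2_eq_sum_m23: "m2 f x2 = (\<Sum>y\<in>UNIV. m23 f x2 y)" unfolding m2_def m23_def by (rule sum.swap)
lemma m3_eq_sum_m13: "m3 f y = (\<Sum>x1\<in>UNIV. m13 f x1 y)" by (simp add: m3_def m13_def)
lemma m3_eq_sum_m23: "m3 f y = (\<Sum>x2\<in>UNIV. m23 f x2 y)" unfolding m3_def m23_def by (rule sum.swap)

lemma m12_nonneg: "(\<And>x1 x2 y. 0 \<le> f x1 x2 y) \<Longrightarrow> 0 \<le> m12 f x1 x2"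
  by (simp add: m12_def sum_nonneg)
lemma m13_nonneg: "(\<And>x1 x2 y. 0 \<le> f x1 x2 y) \<Longrightarrow> 0 \<le> m13 f x1 y"
  by (simp add: m13_def sum_nonneg)
lemma m23_nonneg: "(\<And>x1 x2 y. 0 \<le> f x1 x2 y) \<Longrightarrow> 0 \<le> m23 f x2 y"
  by (simp add: m23_def sum_nonneg)

lemma m13_le_m1: "(\<And>x1 x2 y. 0 \<le> f x1 x2 y) \<Longrightarrow> m13 f x1 y \<le> m1 f x1"
  unfolding m1_eq_sum_m13 by (rule member_le_sum_UNIV[of "m13 f x1"]) (rule m13_nonneg)

lemma I_X12_Y_eq_nent:
  "(\<And>x1 x2 y. 0 \<le> f x1 x2 y) \<Longrightarrow> I_X12_Y f = nent f - nent12 f - nent3 f"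
  unfolding I_X12_Y_def
  by (subst mi_eq_xlnx_sums) (auto simp: sum_UNIV_pair nent_def nent12_def nent3_def m12_def m3_def)

lemma I_X1_YX2_eq_nent:
  "(\<And>x1 x2 y. 0 \<le> f x1 x2 y) \<Longrightarrow> I_X1_YX2 f = nent f - nent1 f - nent23 f"
  unfolding I_X1_YX2_def
  by (subst mi_eq_xlnx_sums) (auto simp: sum_UNIV_pair nent_def nent1_def nent23_def m1_def m23_def)

lemma I_X1_Y_eq_nent:
  "(\<And>x1 x2 y. 0 \<le> f x1 x2 y) \<Longrightarrow> I_X1_Y f = nent13 f - nent1 f - nent3 f"
  unfolding I_X1_Y_def
  by (simp add: mi_eq_xlnx_sums m13_nonneg nent13_def nent1_def nent3_def
      m1_eq_sum_m13[symmetric] m3_eq_sum_m13[symmetric])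

lemma I_X2_Y_eq_nent:
  "(\<And>x1 x2 y. 0 \<le> f x1 x2 y) \<Longrightarrow> I_X2_Y f = nent23 f - nent2 f - nent3 f"
  unfolding I_X2_Y_def
  by (simp add: mi_eq_xlnx_sums m23_nonneg nent23_def nent2_def nent3_def
      m2_eq_sum_m23[symmetric] m3_eq_sum_m23[symmetric])

lemma I_X2_X1_eq_nent:
  assumes "\<And>x1 x2 y. 0 \<le> f x1 x2 y"
  shows "I_X2_X1 f = nent12 f - nent2 f - nent1 f"
proof -
  have "(\<Sum>x2\<in>UNIV. \<Sum>x1\<in>UNIV. m12 f x1 x2 * ln (m12 f x1 x2)) = nent12 f"
    unfolding nent12_def by (rule sum.swap)
  thus ?thesis unfolding I_X2_X1_def
    by (simp add: mi_eq_xlnx_sums m12_nonneg assms nent2_def nent1_def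
        m2_eq_sum_m12[symmetric] m1_eq_sum_m12[symmetric])
qed

lemma I_X2_Y_X1_eq_nent:
  assumes nn: "\<And>x1 x2 y. 0 \<le> f x1 x2 y"
  shows "I_X2_Y_X1 f = nent f + nent1 f - nent12 f - nent13 f"
proof -
  have m12g: "f x1 x2 y \<le> m12 f x1 x2" for x1 x2 y
    unfolding m12_def by (rule member_le_sum_UNIV) (rule nn)
  have m13g: "f x1 x2 y \<le> m13 f x1 y" for x1 x2 y
    unfolding m13_def by (rule member_le_sum_UNIV[of "\<lambda>x2. f x1 x2 y"]) (rule nn)
  have summand: "(if 0 < f x1 x2 y then f x1 x2 y * ln (f x1 x2 y * m1 f x1 / (m12 f x1 x2 * m13 f x1 y)) else 0)
     = f x1 x2 y * ln (f x1 x2 y) + f x1 x2 y * ln (m1 f x1) - f x1 x2 y * ln (m12 f x1 x2)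
        - f x1 x2 y * ln (m13 f x1 y)" for x1 x2 y
  proof (cases "0 < f x1 x2 y")
    case True
    hence "0 < m12 f x1 x2" "0 < m13 f x1 y" "0 < m1 f x1"
      using m12g[of x1 x2 y] m13g[of x1 x2 y] m13_le_m1[of f x1 y, OF nn] by linarith+
    thus ?thesis using True by (simp add: ln_divide_pos ln_mult algebra_simps)
  next
    case False
    hence "f x1 x2 y = 0" using nn[of x1 x2 y] by linarith
    thus ?thesis by simp
  qed
  have "(\<Sum>x1\<in>UNIV. \<Sum>x2\<in>UNIV. \<Sum>y\<in>UNIV. f x1 x2 y * ln (m1 f x1)) = nent1 f"
    by (simp add: nent1_def m1_def sum_distrib_right)
  moreover have "(\<Sum>x1\<in>UNIV. \<Sum>x2\<in>UNIV. \<Sum>y\<in>UNIV. f x1 x2 y * ln (m12 f x1 x2)) = nent12 f"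
    by (simp add: nent12_def m12_def sum_distrib_right)
  moreover have "(\<Sum>x1\<in>UNIV. \<Sum>x2\<in>UNIV. \<Sum>y\<in>UNIV. f x1 x2 y * ln (m13 f x1 y)) = nent13 f"
    unfolding nent13_def
    by (rule sum.cong[OF refl], subst sum.swap) (simp add: m13_def sum_distrib_right)
  ultimately show ?thesis unfolding I_X2_Y_X1_def summand
    by (simp add: sum.distrib sum_subtractf nent_def)
qed

lemma chain_rule_X1_first:
  "(\<And>x1 x2 y. 0 \<le> f x1 x2 y) \<Longrightarrow> I_X12_Y f = I_X1_Y f + I_X2_Y_X1 f"
  by (simp add: I_X12_Y_eq_nent I_X1_Y_eq_nent I_X2_Y_X1_eq_nent)

lemma chain_rule_X2_first:
  "(\<And>x1 x2 y. 0 \<le> f x1 x2 y) \<Longrightarrow> I_X12_Y f = I_X2_Y f - I_X2_X1 f + I_X1_YX2 f"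
  by (simp add: I_X12_Y_eq_nent I_X2_Y_eq_nent I_X2_X1_eq_nent I_X1_YX2_eq_nent)

lemma I_X1_Y_nonneg:
  assumes "is_pmf3 f"
  shows "0 \<le> I_X1_Y f"
proof -
  have "(\<Sum>x1\<in>UNIV. \<Sum>y\<in>UNIV. m13 f x1 y) = 1"
    using assms by (simp add: is_pmf3_def m1_def m1_eq_sum_m13[symmetric])
  thus ?thesis using mi_lower_bound[of "m13 f"] m13_nonneg[of f] assms
    by (simp add: I_X1_Y_def is_pmf3_def)
qed

text \<open>That is, I(X1;X2|Y) \<ge> 0: the lower bound on mutual information, summed over y.\<close>
lemma I_X1_Y_le_I_X1_YX2:
  assumes nn: "\<And>x1 x2 y. 0 \<le> f x1 x2 y"
  shows "I_X1_Y f \<le> I_X1_YX2 f"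
proof -
  have "0 \<le> (\<Sum>x1\<in>UNIV. \<Sum>x2\<in>UNIV. f x1 x2 y * ln (f x1 x2 y))
     - (\<Sum>x1\<in>UNIV. m13 f x1 y * ln (m13 f x1 y))
     - (\<Sum>x2\<in>UNIV. m23 f x2 y * ln (m23 f x2 y))
     + m3 f y * ln (m3 f y)" for y
    using mi_lower_bound[of "\<lambda>x1 x2. f x1 x2 y"] mi_eq_xlnx_sums[of "\<lambda>x1 x2. f x1 x2 y"] nn
    by (simp add: m13_def m23_def m3_def)
  hence "0 \<le> (\<Sum>y\<in>UNIV. (\<Sum>x1\<in>UNIV. \<Sum>x2\<in>UNIV. f x1 x2 y * ln (f x1 x2 y))
     - (\<Sum>x1\<in>UNIV. m13 f x1 y * ln (m13 f x1 y))
     - (\<Sum>x2\<in>UNIV. m23 f x2 y * ln (m23 f x2 y))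
     + m3 f y * ln (m3 f y))"
    by (intro sum_nonneg)
  also have "\<dots> = nent f - nent13 f - nent23 f + nent3 f"
  proof -
    have "(\<Sum>y\<in>UNIV. \<Sum>x1\<in>UNIV. \<Sum>x2\<in>UNIV. f x1 x2 y * ln (f x1 x2 y)) = nent f"
      unfolding nent_def by (subst sum.swap) (rule sum.cong[OF refl], rule sum.swap)
    moreover have "(\<Sum>y\<in>UNIV. \<Sum>x1\<in>UNIV. m13 f x1 y * ln (m13 f x1 y)) = nent13 f"
      unfolding nent13_def by (rule sum.swap)
    moreover have "(\<Sum>y\<in>UNIV. \<Sum>x2\<in>UNIV. m23 f x2 y * ln (m23 f x2 y)) = nent23 f"
      unfolding nent23_def by (rule sum.swap)
    ultimately show ?thesis by (simp only: sum.distrib sum_subtractf nent3_def)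
  qed
  finally show ?thesis using nn by (simp add: I_X1_Y_eq_nent I_X1_YX2_eq_nent)
qed

lemma joint_nonneg: "is_pmf2 PX \<Longrightarrow> is_channel W \<Longrightarrow> 0 \<le> joint PX W x1 x2 y"
  by (simp add: joint_def is_pmf2_def is_channel_def)

lemma m12_joint: "is_channel W \<Longrightarrow> m12 (joint PX W) = PX"
  by (rule ext)+ (simp add: m12_def joint_def is_channel_def sum_distrib_left[symmetric])

lemma is_pmf3_joint:
  assumes "is_pmf2 PX" "is_channel W"
  shows "is_pmf3 (joint PX W)"
proof -
  have "(\<Sum>x1\<in>UNIV. \<Sum>x2\<in>UNIV. \<Sum>y\<in>UNIV. joint PX W x1 x2 y) = (\<Sum>x1\<in>UNIV. \<Sum>x2\<in>UNIV. m12 (joint PX W) x1 x2)"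
    by (simp add: m12_def)
  also have "\<dots> = 1" using assms by (simp add: m12_joint is_pmf2_def)
  finally show ?thesis using joint_nonneg[OF assms] by (simp add: is_pmf3_def)
qed

lemma pmf3_nonneg: "is_pmf3 f \<Longrightarrow> 0 \<le> f x1 x2 y"
  by (simp add: is_pmf3_def)

lemma Gq_pmf3: "f \<in> Gq q P \<Longrightarrow> is_pmf3 f"
  by (simp add: Gq_def)

lemma self_in_L0: "is_pmf3 P \<Longrightarrow> P \<in> L0 q P" by (simp add: L0_def Gq_def)
lemma self_in_L1: "is_pmf3 P \<Longrightarrow> P \<in> L1 q P" by (simp add: L1_def Gq_def)
lemma self_in_L2: "is_pmf3 P \<Longrightarrow> P \<in> L2 q P" by (simp add: L2_def Gq_def)

definition chan_nent :: "('a \<Rightarrow> 'b \<Rightarrow> 'c::finite \<Rightarrow> real) \<Rightarrow> 'a \<Rightarrow> 'b \<Rightarrow> real" where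
  "chan_nent W x1 x2 = (\<Sum>y\<in>UNIV. W x1 x2 y * ln (W x1 x2 y))"

definition avg_chan_nent :: "('a::finite \<Rightarrow> 'b::finite \<Rightarrow> 'c::finite \<Rightarrow> real) \<Rightarrow> ('a \<Rightarrow> 'b \<Rightarrow> real) \<Rightarrow> real" where
  "avg_chan_nent W PX = (\<Sum>x1\<in>UNIV. \<Sum>x2\<in>UNIV. PX x1 x2 * chan_nent W x1 x2)"

lemma xlnx_mult:
  "0 \<le> p \<Longrightarrow> 0 \<le> w \<Longrightarrow> (p * w) * ln (p * w) = w * (p * ln p) + p * (w * ln (w::real))"
  by (cases "p = 0 \<or> w = 0") (auto simp: ln_mult algebra_simps)

lemma nent_joint:
  assumes "is_pmf2 PX" "is_channel W"
  shows "nent (joint PX W) = nent12 (joint PX W) + avg_chan_nent W PX"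
proof -
  have "0 \<le> PX x1 x2" "0 \<le> W x1 x2 y" "(\<Sum>y\<in>UNIV. W x1 x2 y) = 1" for x1 x2 y
    using assms by (auto simp: is_pmf2_def is_channel_def)
  thus ?thesis
    unfolding nent12_def m12_joint[OF assms(2)] unfolding nent_def joint_def
    by (simp add: xlnx_mult sum.distrib sum_distrib_left[symmetric] sum_distrib_right[symmetric]
        avg_chan_nent_def chan_nent_def)
qed

lemma expect_qmatch_joint:
  assumes "is_channel W"
  shows "expect (qmatch W) (joint PX W) = ereal (avg_chan_nent W PX)"
proof -
  have "ereal (joint PX W x1 x2 y) * qmatch W x1 x2 y = ereal (PX x1 x2 * (W x1 x2 y * ln (W x1 x2 y)))"
    for x1 x2 y
    using assms by (cases "0 < W x1 x2 y") (auto simp: qmatch_def joint_def is_channel_def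
        intro: antisym)
  thus ?thesis unfolding expect_def by (simp add: avg_chan_nent_def chan_nent_def sum_distrib_left)
qed

lemma sum_abs_infinite:
  fixes g :: "'a::finite \<Rightarrow> ereal"
  assumes "\<bar>g i\<bar> = \<infinity>"
  shows "\<bar>\<Sum>j\<in>UNIV. g j\<bar> = \<infinity>"
proof -
  have "finite (UNIV::'a set) \<and> (\<exists>i\<in>UNIV. \<bar>g i\<bar> = \<infinity>)"
    using assms by (intro conjI bexI[of _ i]) simp_all
  thus ?thesis by (subst sum_Inf)
qed

lemma expect_qmatch_upper:
  assumes "\<And>x1 x2 y. 0 \<le> f x1 x2 y"
  shows "expect (qmatch W) f \<le> ereal (\<Sum>x1\<in>UNIV. \<Sum>x2\<in>UNIV. \<Sum>y\<in>UNIV.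
    if 0 < W x1 x2 y then f x1 x2 y * ln (W x1 x2 y) else 0)"
  unfolding expect_def sum_ereal[symmetric]
proof (intro sum_mono)
  fix x1 x2 y
  show "ereal (f x1 x2 y) * qmatch W x1 x2 y
      \<le> ereal (if 0 < W x1 x2 y then f x1 x2 y * ln (W x1 x2 y) else 0)"
    using assms[of x1 x2 y] by (cases "f x1 x2 y = 0") (auto simp: qmatch_def)
qed

text \<open>A finite lower bound on the expected metric excludes any mass where W = 0,
  which would make the expectation -\<infinity>.\<close>
lemma Gq_qmatch_support:
  assumes w: "is_channel W" and f: "f \<in> Gq (qmatch W) (joint PX W)" and pos: "0 < f x1 x2 y"
  shows "0 < W x1 x2 y"
proof (rule ccontr)
  assume "\<not> 0 < W x1 x2 y"
  hence minf: "ereal (f x1 x2 y) * qmatch W x1 x2 y = -\<infinity>" using pos by (simp add: qmatch_def)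
  have "\<bar>expect (qmatch W) f\<bar> = \<infinity>" unfolding expect_def
    by (intro sum_abs_infinite[of _ x1] sum_abs_infinite[of _ x2] sum_abs_infinite[of _ y]) (simp add: minf)
  moreover have "ereal (avg_chan_nent W PX) \<le> expect (qmatch W) f"
    using f expect_qmatch_joint[OF w] by (simp add: Gq_def)
  moreover note expect_qmatch_upper[of f W, OF pmf3_nonneg[OF Gq_pmf3[OF f]]]
  ultimately show False by auto
qed

lemma Gq_qmatch_expect:
  assumes w: "is_channel W" and f: "f \<in> Gq (qmatch W) (joint PX W)"
  shows "avg_chan_nent W PX \<le> (\<Sum>x1\<in>UNIV. \<Sum>x2\<in>UNIV. \<Sum>y\<in>UNIV. f x1 x2 y * ln (W x1 x2 y))"
proof -
  have "ereal (f x1 x2 y) * qmatch W x1 x2 y = ereal (f x1 x2 y * ln (W x1 x2 y))" for x1 x2 y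
  proof (cases "0 < W x1 x2 y")
    case False
    hence "f x1 x2 y = 0"
      using Gq_qmatch_support[OF w f, of x1 x2 y] pmf3_nonneg[OF Gq_pmf3[OF f], of x1 x2 y] by force
    thus ?thesis by (simp add: zero_ereal_def[symmetric])
  qed (simp add: qmatch_def)
  hence "expect (qmatch W) f = ereal (\<Sum>x1\<in>UNIV. \<Sum>x2\<in>UNIV. \<Sum>y\<in>UNIV. f x1 x2 y * ln (W x1 x2 y))"
    unfolding expect_def by simp
  thus ?thesis using f expect_qmatch_joint[OF w] by (simp add: Gq_def)
qed

text \<open>Gibbs' inequality: the relative entropy of f with respect to PX W is nonnegative,
  and by the two facts above it is at most nent f - nent (joint PX W).\<close>
lemma nent_joint_le_Gq:
  assumes px: "is_pmf2 PX" and w: "is_channel W" and f: "f \<in> Gq (qmatch W) (joint PX W)"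
  shows "nent (joint PX W) \<le> nent f"
proof -
  have fn: "0 \<le> f x1 x2 y" for x1 x2 y using f by (simp add: Gq_def is_pmf3_def)
  have f1: "(\<Sum>x1\<in>UNIV. \<Sum>x2\<in>UNIV. \<Sum>y\<in>UNIV. f x1 x2 y) = 1" using f by (simp add: Gq_def is_pmf3_def)
  have m12f: "m12 f = PX" using f m12_joint[OF w] by (simp add: Gq_def)
  have wn: "0 \<le> W x1 x2 y" for x1 x2 y using w by (simp add: is_channel_def)
  have pn: "0 \<le> PX x1 x2" for x1 x2 using px by (simp add: is_pmf2_def)
  have j1: "(\<Sum>x1\<in>UNIV. \<Sum>x2\<in>UNIV. \<Sum>y\<in>UNIV. PX x1 x2 * W x1 x2 y) = 1"
    using is_pmf3_joint[OF px w] by (simp add: is_pmf3_def joint_def)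
  have fle: "f x1 x2 y \<le> PX x1 x2" for x1 x2 y
    unfolding m12f[symmetric] m12_def by (rule member_le_sum_UNIV) (rule fn)
  have supp: "0 < PX x1 x2" "0 < W x1 x2 y" if "0 < f x1 x2 y" for x1 x2 y
    using that fle[of x1 x2 y] Gq_qmatch_support[OF w f, of x1 x2 y] by auto
  define a where "a p = f (fst p) (fst (snd p)) (snd (snd p))" for p
  define A where "A p = PX (fst p) (fst (snd p)) * W (fst p) (fst (snd p)) (snd (snd p))" for p
  have "kl_term (\<Sum>p\<in>UNIV. a p) (\<Sum>p\<in>UNIV. A p) \<le> (\<Sum>p\<in>UNIV. kl_term (a p) (A p))"
    by (rule log_sum_inequality) (auto simp: a_def A_def fn pn wn supp)
  also have "kl_term (\<Sum>p\<in>UNIV. a p) (\<Sum>p\<in>UNIV. A p) = 0"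
    unfolding sum_UNIV_triple a_def A_def by (simp add: f1 j1 kl_term_def)
  also have "kl_term (f x1 x2 y) (PX x1 x2 * W x1 x2 y)
      = f x1 x2 y * ln (f x1 x2 y) - f x1 x2 y * ln (PX x1 x2) - f x1 x2 y * ln (W x1 x2 y)" for x1 x2 y
    using supp[of x1 x2 y] fn[of x1 x2 y]
    by (cases "0 < f x1 x2 y") (auto simp: kl_term_def ln_divide_pos ln_mult algebra_simps)
  hence "(\<Sum>p\<in>UNIV. kl_term (a p) (A p)) = nent f
      - (\<Sum>x1\<in>UNIV. \<Sum>x2\<in>UNIV. \<Sum>y\<in>UNIV. f x1 x2 y * ln (PX x1 x2))
      - (\<Sum>x1\<in>UNIV. \<Sum>x2\<in>UNIV. \<Sum>y\<in>UNIV. f x1 x2 y * ln (W x1 x2 y))"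
    unfolding sum_UNIV_triple a_def A_def by (simp add: nent_def sum_subtractf)
  also have "(\<Sum>x1\<in>UNIV. \<Sum>x2\<in>UNIV. \<Sum>y\<in>UNIV. f x1 x2 y * ln (PX x1 x2)) = nent12 (joint PX W)"
    unfolding m12_joint[OF w] nent12_def m12f[symmetric] by (simp add: m12_def sum_distrib_right)
  finally show ?thesis using nent_joint[OF px w] Gq_qmatch_expect[OF w f] by linarith
qed

lemma I_X2_Y_X1_joint_le_L2:
  assumes px: "is_pmf2 PX" and w: "is_channel W" and f: "f \<in> L2 (qmatch W) (joint PX W)"
  shows "I_X2_Y_X1 (joint PX W) \<le> I_X2_Y_X1 f"
proof -
  have g: "f \<in> Gq (qmatch W) (joint PX W)" and "m13 f = m13 (joint PX W)"
    using f by (auto simp: L2_def)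
  moreover have "m12 f = m12 (joint PX W)" using g by (simp add: Gq_def)
  ultimately have "nent1 f = nent1 (joint PX W)" "nent12 f = nent12 (joint PX W)"
    "nent13 f = nent13 (joint PX W)"
    by (simp_all add: nent1_def nent12_def nent13_def m1_eq_sum_m13)
  thus ?thesis using nent_joint_le_Gq[OF px w g]
    by (simp add: I_X2_Y_X1_eq_nent pmf3_nonneg[OF Gq_pmf3[OF g]] joint_nonneg[OF px w])
qed

lemma I_X1_YX2_joint_le_L1:
  assumes px: "is_pmf2 PX" and w: "is_channel W" and f: "f \<in> L1 (qmatch W) (joint PX W)"
  shows "I_X1_YX2 (joint PX W) \<le> I_X1_YX2 f"
proof -
  have g: "f \<in> Gq (qmatch W) (joint PX W)" and "m23 f = m23 (joint PX W)"
    using f by (auto simp: L1_def)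
  moreover have "m12 f = m12 (joint PX W)" using g by (simp add: Gq_def)
  ultimately have "nent1 f = nent1 (joint PX W)" "nent23 f = nent23 (joint PX W)"
    by (simp_all add: nent1_def nent23_def m1_eq_sum_m12)
  thus ?thesis using nent_joint_le_Gq[OF px w g]
    by (simp add: I_X1_YX2_eq_nent pmf3_nonneg[OF Gq_pmf3[OF g]] joint_nonneg[OF px w])
qed

lemma I_X12_Y_joint_le_L0:
  assumes px: "is_pmf2 PX" and w: "is_channel W" and f: "f \<in> L0 (qmatch W) (joint PX W)"
  shows "I_X12_Y (joint PX W) \<le> I_X12_Y f"
proof -
  have g: "f \<in> Gq (qmatch W) (joint PX W)" and "m3 f = m3 (joint PX W)"
    using f by (auto simp: L0_def)
  moreover have "m12 f = m12 (joint PX W)" using g by (simp add: Gq_def)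
  ultimately have "nent12 f = nent12 (joint PX W)" "nent3 f = nent3 (joint PX W)"
    by (simp_all add: nent12_def nent3_def)
  thus ?thesis using nent_joint_le_Gq[OF px w g]
    by (simp add: I_X12_Y_eq_nent pmf3_nonneg[OF Gq_pmf3[OF g]] joint_nonneg[OF px w])
qed

definition match_region :: "('a::finite \<Rightarrow> 'b::finite \<Rightarrow> 'c::finite \<Rightarrow> real) \<Rightarrow> ('a \<Rightarrow> 'b \<Rightarrow> real) \<Rightarrow> (real \<times> real) set" where
  "match_region W PX = {(R1, R2). 0 \<le> R1 \<and> 0 \<le> R2 \<and>
      R2 \<le> I_X2_Y_X1 (joint PX W) \<and> R1 + R2 \<le> I_X12_Y (joint PX W)}"

lemma R_match_eq_Union: "R_match W = (\<Union>PX\<in>{PX. is_pmf2 PX}. match_region W PX)"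
  by (simp add: R_match_def match_region_def)

lemma ereal_le_INF_at:
  "ereal a \<le> (INF f\<in>A. ereal (g f)) \<Longrightarrow> f \<in> A \<Longrightarrow> a \<le> g f"
  using INF_lower[of f A "\<lambda>f. ereal (g f)"] by (metis ereal_less_eq(3) order.trans)

lemma Rsup_tilde_subset_match_region:
  assumes px: "is_pmf2 PX" and w: "is_channel W"
  shows "Rsup_tilde (qmatch W) (joint PX W) \<subseteq> match_region W PX"
proof (clarify)
  let ?P = "joint PX W" and ?q = "qmatch W"
  fix R1 R2 assume r: "(R1, R2) \<in> Rsup_tilde ?q ?P"
  have p3: "is_pmf3 ?P" by (rule is_pmf3_joint[OF px w])
  have "ereal R2 \<le> (INF f\<in>L2 ?q ?P. ereal (I_X2_Y_X1 f))" using r by (simp add: Rsup_tilde_def)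
  hence r2: "R2 \<le> I_X2_Y_X1 ?P" by (rule ereal_le_INF_at) (rule self_in_L2[OF p3])
  have "R1 + R2 \<le> I_X12_Y ?P"
  proof (cases "I_X1_Y ?P \<le> R1")
    case True
    have "ereal (R1 + R2) \<le> (INF f\<in>{f \<in> L0 ?q ?P. I_X1_Y f \<le> R1}. ereal (I_X12_Y f))"
      using r by (simp add: Rsup_tilde_def)
    thus ?thesis by (rule ereal_le_INF_at) (simp add: True self_in_L0[OF p3])
  next
    case False
    thus ?thesis using r2 chain_rule_X1_first[of "joint PX W", OF joint_nonneg[OF px w]] by simp
  qed
  thus "(R1, R2) \<in> match_region W PX" using r r2 by (simp add: Rsup_tilde_def match_region_def)
qed

lemma match_region_subset_Rsup_tilde:
  assumes px: "is_pmf2 PX" and w: "is_channel W"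
  shows "match_region W PX \<subseteq> Rsup_tilde (qmatch W) (joint PX W)"
proof (clarify)
  let ?P = "joint PX W" and ?q = "qmatch W"
  fix R1 R2 assume r: "(R1, R2) \<in> match_region W PX"
  have "ereal R2 \<le> (INF f\<in>L2 ?q ?P. ereal (I_X2_Y_X1 f))"
    using r I_X2_Y_X1_joint_le_L2[OF px w] by (auto simp: le_INF_iff match_region_def intro: order.trans)
  moreover have "ereal (R1 + R2) \<le> (INF f\<in>{f \<in> L0 ?q ?P. I_X1_Y f \<le> R1}. ereal (I_X12_Y f))"
    using r I_X12_Y_joint_le_L0[OF px w] by (auto simp: le_INF_iff match_region_def intro: order.trans)
  ultimately show "(R1, R2) \<in> Rsup_tilde ?q ?P" using r by (simp add: Rsup_tilde_def match_region_def)
qed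

lemma Rbin_star_subset_match_region:
  assumes px: "is_pmf2 PX" and w: "is_channel W"
  shows "Rbin_star (qmatch W) (joint PX W) \<subseteq> match_region W PX"
proof (clarify)
  let ?P = "joint PX W" and ?q = "qmatch W"
  have p3: "is_pmf3 ?P" by (rule is_pmf3_joint[OF px w])
  have nn: "\<And>x1 x2 y. 0 \<le> ?P x1 x2 y" by (rule joint_nonneg[OF px w])
  fix R1 R2 assume "(R1, R2) \<in> Rbin_star ?q ?P"
  then obtain R1a R1b where a: "0 \<le> R1" "0 \<le> R2" "0 \<le> R1a" "0 \<le> R1b" "R1 = R1a + R1b"
    and b1: "ereal R1a \<le> R1' ?q ?P" and b2: "ereal (R1b + R2) \<le> R2' ?q ?P"
    and c: "ereal R1a \<le> R1'' ?q ?P (R1b + R2) \<or> ereal (R1b + R2) \<le> R2'' ?q ?P R1a"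
    by (auto simp: Rbin_star_def)
  have r2: "R1b + R2 \<le> I_X2_Y_X1 ?P"
    using b2 unfolding R2'_def by (rule ereal_le_INF_at) (rule self_in_L2[OF p3])
  have r1: "R1a \<le> I_X1_YX2 ?P"
    using b1 unfolding R1'_def by (rule ereal_le_INF_at) (rule self_in_L1[OF p3])
  from c have "R1 + R2 \<le> I_X12_Y ?P"
  proof
    assume "ereal R1a \<le> R1'' ?q ?P (R1b + R2)"
    hence "R1a \<le> I_X1_Y ?P + max 0 (I_X2_Y_X1 ?P - (R1b + R2))"
      unfolding R1''_def by (rule ereal_le_INF_at) (rule self_in_L0[OF p3])
    thus ?thesis using r2 a chain_rule_X1_first[of "joint PX W", OF nn] by simp
  next
    assume "ereal (R1b + R2) \<le> R2'' ?q ?P R1a"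
    hence "R1b + R2 \<le> I_X2_Y ?P - I_X2_X1 ?P + max 0 (I_X1_YX2 ?P - R1a)"
      unfolding R2''_def by (rule ereal_le_INF_at) (rule self_in_L0[OF p3])
    thus ?thesis using r1 a chain_rule_X2_first[of "joint PX W", OF nn] by simp
  qed
  thus "(R1, R2) \<in> match_region W PX" using a r2 by (simp add: match_region_def)
qed

text \<open>The rate R1 is split so that R1b + R2 = min (R1 + R2, I(X2;Y|X1)); then the R1''
  alternative of the binning region holds for every f \<in> L0, by the chain rule for f.\<close>
lemma match_region_subset_Rbin_star:
  assumes px: "is_pmf2 PX" and w: "is_channel W"
  shows "match_region W PX \<subseteq> Rbin_star (qmatch W) (joint PX W)"
proof (clarify)
  let ?P = "joint PX W" and ?q = "qmatch W"
  have nn: "\<And>x1 x2 y. 0 \<le> ?P x1 x2 y" by (rule joint_nonneg[OF px w])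
  fix R1 R2 assume "(R1, R2) \<in> match_region W PX"
  hence a: "0 \<le> R1" "0 \<le> R2" "R2 \<le> I_X2_Y_X1 ?P" "R1 + R2 \<le> I_X12_Y ?P"
    by (auto simp: match_region_def)
  define R1b where "R1b = min R1 (I_X2_Y_X1 ?P - R2)"
  define R1a where "R1a = R1 - R1b"
  have v: "0 \<le> R1a" "0 \<le> R1b" "R1 = R1a + R1b" "R1a \<le> I_X1_YX2 ?P" "R1b + R2 \<le> I_X2_Y_X1 ?P"
     "R1a \<le> I_X12_Y ?P - (R1b + R2)"
    using a chain_rule_X1_first[of "joint PX W", OF nn] I_X1_Y_nonneg[OF is_pmf3_joint[OF px w]]
      I_X1_Y_le_I_X1_YX2[of "joint PX W", OF nn]
    by (auto simp: R1a_def R1b_def min_def)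
  have "ereal R1a \<le> R1' ?q ?P" unfolding R1'_def le_INF_iff
    using v(4) I_X1_YX2_joint_le_L1[OF px w] by (auto intro: order.trans)
  moreover have "ereal (R1b + R2) \<le> R2' ?q ?P" unfolding R2'_def le_INF_iff
    using v(5) I_X2_Y_X1_joint_le_L2[OF px w] by (auto intro: order.trans)
  moreover have "ereal R1a \<le> R1'' ?q ?P (R1b + R2)" unfolding R1''_def le_INF_iff
  proof
    fix f assume f: "f \<in> L0 ?q ?P"
    hence "I_X12_Y ?P \<le> I_X12_Y f" by (rule I_X12_Y_joint_le_L0[OF px w])
    moreover have "\<And>x1 x2 y. 0 \<le> f x1 x2 y"
      using f by (auto simp: L0_def intro: pmf3_nonneg[OF Gq_pmf3])
    ultimately show "ereal R1a \<le> ereal (I_X1_Y f + max 0 (I_X2_Y_X1 f - (R1b + R2)))"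
      using v(6) chain_rule_X1_first[of f] by simp
  qed
  ultimately show "(R1, R2) \<in> Rbin_star ?q ?P" using a v unfolding Rbin_star_def by blast
qed

lemma Rsup_tilde_qmatch_eq:
  "is_pmf2 PX \<Longrightarrow> is_channel W \<Longrightarrow> Rsup_tilde (qmatch W) (joint PX W) = match_region W PX"
  by (intro equalityI Rsup_tilde_subset_match_region match_region_subset_Rsup_tilde)

lemma Rbin_star_qmatch_eq:
  "is_pmf2 PX \<Longrightarrow> is_channel W \<Longrightarrow> Rbin_star (qmatch W) (joint PX W) = match_region W PX"
  by (intro equalityI Rbin_star_subset_match_region match_region_subset_Rbin_star)

definition nent_Y_given_X1 :: "('a::finite \<Rightarrow> 'b::finite \<Rightarrow> 'c::finite \<Rightarrow> real) \<Rightarrow> real" where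
  "nent_Y_given_X1 f = (\<Sum>x1\<in>UNIV. \<Sum>y\<in>UNIV. kl_term (m13 f x1 y) (m1 f x1))"

lemma nent_Y_given_X1_eq:
  assumes nn: "\<And>x1 x2 y. 0 \<le> f x1 x2 y"
  shows "nent_Y_given_X1 f = nent13 f - nent1 f"
proof -
  have "kl_term (m13 f x1 y) (m1 f x1) = m13 f x1 y * ln (m13 f x1 y) - m13 f x1 y * ln (m1 f x1)"
    for x1 y
    using m13_le_m1[of f x1 y, OF nn] m13_nonneg[of f x1 y, OF nn]
    by (cases "0 < m13 f x1 y") (auto simp: kl_term_def ln_divide_pos algebra_simps)
  thus ?thesis unfolding nent_Y_given_X1_def nent13_def nent1_def
    by (simp add: sum_subtractf sum_distrib_right[symmetric] m1_eq_sum_m13[symmetric])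
qed

lemma I_X2_Y_X1_joint_eq:
  assumes "is_pmf2 PX" "is_channel W"
  shows "I_X2_Y_X1 (joint PX W) = avg_chan_nent W PX - nent_Y_given_X1 (joint PX W)"
  using I_X2_Y_X1_eq_nent[of "joint PX W"] nent_Y_given_X1_eq[of "joint PX W"]
    nent_joint[OF assms] joint_nonneg[OF assms]
  by simp

lemma I_X12_Y_joint_eq:
  assumes "is_pmf2 PX" "is_channel W"
  shows "I_X12_Y (joint PX W) = avg_chan_nent W PX - nent3 (joint PX W)"
  using I_X12_Y_eq_nent[of "joint PX W"] nent_joint[OF assms] joint_nonneg[OF assms]
  by simp

lemma is_pmf2_convex_comb:
  "is_pmf2 Pa \<Longrightarrow> is_pmf2 Pb \<Longrightarrow> 0 \<le> u \<Longrightarrow> 0 \<le> v \<Longrightarrow> u + v = 1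
    \<Longrightarrow> is_pmf2 (\<lambda>x1 x2. u * Pa x1 x2 + v * Pb x1 x2)"
  by (simp add: is_pmf2_def sum.distrib sum_distrib_left[symmetric])

lemma joint_convex_comb:
  "joint (\<lambda>x1 x2. u * Pa x1 x2 + v * Pb x1 x2) W
    = (\<lambda>x1 x2 y. u * joint Pa W x1 x2 y + v * joint Pb W x1 x2 y)"
  by (simp add: joint_def algebra_simps)

lemma avg_chan_nent_convex_comb:
  "avg_chan_nent W (\<lambda>x1 x2. u * Pa x1 x2 + v * Pb x1 x2) = u * avg_chan_nent W Pa + v * avg_chan_nent W Pb"
  by (simp add: avg_chan_nent_def algebra_simps sum.distrib sum_distrib_left)

lemma nent3_convex:
  assumes "\<And>x1 x2 y. 0 \<le> f x1 x2 y" "\<And>x1 x2 y. 0 \<le> g x1 x2 y" "0 \<le> u" "0 \<le> v" "u + v = 1"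
  shows "nent3 (\<lambda>x1 x2 y. u * f x1 x2 y + v * g x1 x2 y) \<le> u * nent3 f + v * nent3 g"
proof -
  have "m3 (\<lambda>x1 x2 y. u * f x1 x2 y + v * g x1 x2 y) y = u * m3 f y + v * m3 g y" for y
    by (simp add: m3_def sum.distrib sum_distrib_left)
  moreover have "0 \<le> m3 f y" "0 \<le> m3 g y" for y
    using assms by (auto simp: m3_def intro!: sum_nonneg)
  ultimately show ?thesis unfolding nent3_def sum_distrib_left sum.distrib[symmetric]
    by (intro sum_mono) (simp add: xlnx_convex assms)
qed

lemma nent_Y_given_X1_convex:
  assumes f: "\<And>x1 x2 y. 0 \<le> f x1 x2 y" and g: "\<And>x1 x2 y. 0 \<le> g x1 x2 y"
    and uv: "0 \<le> u" "0 \<le> v" "u + v = 1"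
  shows "nent_Y_given_X1 (\<lambda>x1 x2 y. u * f x1 x2 y + v * g x1 x2 y)
    \<le> u * nent_Y_given_X1 f + v * nent_Y_given_X1 g"
proof -
  let ?h = "\<lambda>x1 x2 y. u * f x1 x2 y + v * g x1 x2 y"
  have m13h: "m13 ?h x1 y = u * m13 f x1 y + v * m13 g x1 y" for x1 y
    by (simp add: m13_def sum.distrib sum_distrib_left)
  have m1h: "m1 ?h x1 = u * m1 f x1 + v * m1 g x1" for x1
    by (simp add: m1_eq_sum_m13 m13h sum.distrib sum_distrib_left)
  have "kl_term (m13 ?h x1 y) (m1 ?h x1)
      \<le> kl_term (u * m13 f x1 y) (u * m1 f x1) + kl_term (v * m13 g x1 y) (v * m1 g x1)" for x1 y
    unfolding m13h m1h
    using m13_le_m1[of f x1 y, OF f] m13_le_m1[of g x1 y, OF g]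
      m13_nonneg[of f x1 y, OF f] m13_nonneg[of g x1 y, OF g] uv
    by (intro log_sum_inequality_two) (auto simp: zero_less_mult_iff)
  thus ?thesis unfolding nent_Y_given_X1_def sum_distrib_left sum.distrib[symmetric]
    by (intro sum_mono) (simp add: kl_term_scale uv)
qed

lemma match_region_convex_comb:
  assumes w: "is_channel W" and pa: "is_pmf2 Pa" and pb: "is_pmf2 Pb"
    and x: "x \<in> match_region W Pa" and y: "y \<in> match_region W Pb"
    and uv: "0 \<le> u" "0 \<le> v" "u + v = 1"
  shows "u *\<^sub>R x + v *\<^sub>R y \<in> match_region W (\<lambda>x1 x2. u * Pa x1 x2 + v * Pb x1 x2)"
proof -
  let ?P = "\<lambda>x1 x2. u * Pa x1 x2 + v * Pb x1 x2"
  obtain a1 a2 where xa: "x = (a1, a2)" by (cases x)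
  obtain b1 b2 where yb: "y = (b1, b2)" by (cases y)
  have p: "is_pmf2 ?P" by (rule is_pmf2_convex_comb[OF pa pb uv])
  have "u * a2 + v * b2 \<le> u * I_X2_Y_X1 (joint Pa W) + v * I_X2_Y_X1 (joint Pb W)"
    "u * (a1 + a2) + v * (b1 + b2) \<le> u * I_X12_Y (joint Pa W) + v * I_X12_Y (joint Pb W)"
    using x y xa yb uv by (auto simp: match_region_def intro!: add_mono mult_left_mono)
  moreover have "u * I_X2_Y_X1 (joint Pa W) + v * I_X2_Y_X1 (joint Pb W) \<le> I_X2_Y_X1 (joint ?P W)"
    unfolding I_X2_Y_X1_joint_eq[OF p w] I_X2_Y_X1_joint_eq[OF pa w] I_X2_Y_X1_joint_eq[OF pb w]
    unfolding joint_convex_comb avg_chan_nent_convex_comb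
    using nent_Y_given_X1_convex[of "joint Pa W" "joint Pb W", OF joint_nonneg[OF pa w] joint_nonneg[OF pb w] uv]
    by (simp add: algebra_simps)
  moreover have "u * I_X12_Y (joint Pa W) + v * I_X12_Y (joint Pb W) \<le> I_X12_Y (joint ?P W)"
    unfolding I_X12_Y_joint_eq[OF p w] I_X12_Y_joint_eq[OF pa w] I_X12_Y_joint_eq[OF pb w]
    unfolding joint_convex_comb avg_chan_nent_convex_comb
    using nent3_convex[of "joint Pa W" "joint Pb W", OF joint_nonneg[OF pa w] joint_nonneg[OF pb w] uv]
    by (simp add: algebra_simps)
  moreover have "0 \<le> u * a1 + v * b1" "0 \<le> u * a2 + v * b2"
    using x y xa yb uv by (auto simp: match_region_def)
  ultimately show ?thesis using xa yb by (simp add: match_region_def algebra_simps)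
qed

lemma convex_R_match:
  assumes w: "is_channel W"
  shows "convex (R_match W)"
proof (rule convexI)
  fix x y and u v :: real
  assume x: "x \<in> R_match W" and y: "y \<in> R_match W" and uv: "0 \<le> u" "0 \<le> v" "u + v = 1"
  from x obtain Pa where pa: "is_pmf2 Pa" "x \<in> match_region W Pa" unfolding R_match_eq_Union by auto
  from y obtain Pb where pb: "is_pmf2 Pb" "y \<in> match_region W Pb" unfolding R_match_eq_Union by auto
  show "u *\<^sub>R x + v *\<^sub>R y \<in> R_match W" unfolding R_match_eq_Union
    using match_region_convex_comb[OF w pa(1) pb(1) pa(2) pb(2) uv] is_pmf2_convex_comb[OF pa(1) pb(1) uv]
    by blast
qed

definition pmf2_of_vec :: "real^('a::finite \<times> 'b::finite) \<Rightarrow> 'a \<Rightarrow> 'b \<Rightarrow> real" where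
  "pmf2_of_vec v = (\<lambda>x1 x2. v $ (x1, x2))"

definition pmf_simplex :: "(real^'i::finite) set" where
  "pmf_simplex = {v. (\<forall>i. 0 \<le> v $ i) \<and> (\<Sum>i\<in>UNIV. v $ i) = 1}"

lemma is_pmf2_of_vec_iff: "is_pmf2 (pmf2_of_vec v) \<longleftrightarrow> v \<in> pmf_simplex"
proof -
  have "(\<forall>i. 0 \<le> v $ i) \<longleftrightarrow> (\<forall>a b. 0 \<le> v $ (a, b))" by (metis prod.collapse)
  moreover have "(\<Sum>i\<in>UNIV. v $ i) = (\<Sum>a\<in>UNIV. \<Sum>b\<in>UNIV. v $ (a, b))" by (rule sum_UNIV_pair)
  ultimately show ?thesis unfolding is_pmf2_def pmf_simplex_def pmf2_of_vec_def by simp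
qed

lemma compact_pmf_simplex: "compact (pmf_simplex :: (real^'i::finite) set)"
proof -
  have closed: "closed (pmf_simplex :: (real^'i) set)"
    unfolding pmf_simplex_def
    by (intro closed_Collect_conj closed_Collect_all closed_Collect_le closed_Collect_eq continuous_intros)
  have "v $ i \<le> 1" if "v \<in> pmf_simplex" for v :: "real^'i" and i
    using member_le_sum_UNIV[of "\<lambda>j. v $ j" i] that by (simp add: pmf_simplex_def)
  hence "pmf_simplex \<subseteq> cbox 0 (1::real^'i)"
    by (auto simp: mem_box_cart pmf_simplex_def)
  hence "pmf_simplex = cbox 0 1 \<inter> (pmf_simplex :: (real^'i) set)" by blast
  thus ?thesis using compact_Int_closed[OF compact_cbox closed] by metis
qed

lemma continuous_on_info_terms_vec:
  "continuous_on UNIV (\<lambda>v. avg_chan_nent W (pmf2_of_vec v))"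
  "continuous_on UNIV (\<lambda>v. nent13 (joint (pmf2_of_vec v) W))"
  "continuous_on UNIV (\<lambda>v. nent1 (joint (pmf2_of_vec v) W))"
  "continuous_on UNIV (\<lambda>v. nent3 (joint (pmf2_of_vec v) W))"
  unfolding avg_chan_nent_def nent13_def nent1_def nent3_def m13_def m1_def m3_def joint_def
    pmf2_of_vec_def
  by (intro continuous_intros)+

definition match_graph ::
    "('a::finite \<Rightarrow> 'b::finite \<Rightarrow> 'c::finite \<Rightarrow> real) \<Rightarrow> ((real^('a \<times> 'b)) \<times> (real \<times> real)) set" where
  "match_graph W = {(v, r). v \<in> pmf_simplex \<and> r \<in> match_region W (pmf2_of_vec v)}"

lemma R_match_eq_image_match_graph: "R_match W = snd ` match_graph W"
proof (intro equalityI subsetI)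
  fix r assume "r \<in> R_match W"
  then obtain PX where px: "is_pmf2 PX" "r \<in> match_region W PX" unfolding R_match_eq_Union by auto
  have "pmf2_of_vec (\<chi> i. PX (fst i) (snd i)) = PX" by (simp add: pmf2_of_vec_def)
  hence "((\<chi> i. PX (fst i) (snd i)), r) \<in> match_graph W"
    using px is_pmf2_of_vec_iff[of "\<chi> i. PX (fst i) (snd i)"] by (simp add: match_graph_def)
  thus "r \<in> snd ` match_graph W" by force
next
  fix r assume "r \<in> snd ` match_graph W"
  thus "r \<in> R_match W"
    unfolding R_match_eq_Union by (force simp: match_graph_def is_pmf2_of_vec_iff[symmetric])
qed

lemma closed_match_graph:
  assumes w: "is_channel W"
  shows "closed (match_graph W)"
proof -
  let ?I2 = "\<lambda>v. avg_chan_nent W (pmf2_of_vec v)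
    - (nent13 (joint (pmf2_of_vec v) W) - nent1 (joint (pmf2_of_vec v) W))"
  let ?I12 = "\<lambda>v. avg_chan_nent W (pmf2_of_vec v) - nent3 (joint (pmf2_of_vec v) W)"
  have "match_graph W = (pmf_simplex \<times> UNIV) \<inter> {p. 0 \<le> fst (snd p)} \<inter> {p. 0 \<le> snd (snd p)}
    \<inter> {p. snd (snd p) \<le> ?I2 (fst p)} \<inter> {p. fst (snd p) + snd (snd p) \<le> ?I12 (fst p)}"
    using I_X2_Y_X1_joint_eq[OF _ w] I_X12_Y_joint_eq[OF _ w]
      nent_Y_given_X1_eq[of "joint PX W" for PX, OF joint_nonneg[OF _ w]]
    by (auto simp: match_graph_def match_region_def is_pmf2_of_vec_iff[symmetric])
  moreover have "continuous_on UNIV (\<lambda>p :: (real^('a \<times> 'b)) \<times> (real \<times> real). F (fst p))"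
    if "continuous_on UNIV F" for F :: "real^('a \<times> 'b) \<Rightarrow> real"
    using continuous_on_compose2[OF that continuous_on_fst[OF continuous_on_id]] by simp
  ultimately show ?thesis using continuous_on_info_terms_vec[of W]
    by (simp only:) (intro closed_Int closed_Times compact_imp_closed[OF compact_pmf_simplex]
        closed_UNIV closed_Collect_le continuous_intros; simp)
qed

lemma compact_match_graph:
  assumes w: "is_channel W"
  shows "compact (match_graph W)"
proof -
  let ?I12 = "\<lambda>v. avg_chan_nent W (pmf2_of_vec v) - nent3 (joint (pmf2_of_vec v) W)"
  have "continuous_on UNIV ?I12"
    using continuous_on_info_terms_vec(1,4) by (rule continuous_on_diff)
  hence "continuous_on pmf_simplex ?I12" by (rule continuous_on_subset) (rule subset_UNIV)
  hence "compact (?I12 ` pmf_simplex)" by (rule compact_continuous_image) (rule compact_pmf_simplex)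
  then obtain M where M: "\<forall>x\<in>?I12 ` pmf_simplex. norm x \<le> M"
    using compact_imp_bounded bounded_iff by blast
  have "match_graph W \<subseteq> pmf_simplex \<times> (cbox 0 M \<times> cbox 0 M)"
  proof
    fix p assume p: "p \<in> match_graph W"
    obtain v R1 R2 where p_eq: "p = (v, R1, R2)" by (rule prod_cases3)
    from p have "v \<in> pmf_simplex" "0 \<le> R1" "0 \<le> R2" "R1 + R2 \<le> ?I12 v"
      using I_X12_Y_joint_eq[OF _ w]
      by (auto simp: p_eq match_graph_def match_region_def is_pmf2_of_vec_iff[symmetric])
    moreover have "?I12 v \<le> M" using M \<open>v \<in> pmf_simplex\<close> by fastforce
    ultimately show "p \<in> pmf_simplex \<times> (cbox 0 M \<times> cbox 0 M)" by (auto simp: p_eq)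
  qed
  hence "match_graph W = (pmf_simplex \<times> (cbox 0 M \<times> cbox 0 M)) \<inter> match_graph W" by blast
  thus ?thesis
    using compact_Int_closed[OF compact_Times[OF compact_pmf_simplex compact_Times[OF compact_cbox compact_cbox]]
        closed_match_graph[OF w]]
    by metis
qed

lemma closed_R_match:
  assumes "is_channel W"
  shows "closed (R_match W)"
  unfolding R_match_eq_image_match_graph
  by (intro compact_imp_closed compact_continuous_image[OF continuous_on_snd[OF continuous_on_id]]
      compact_match_graph[OF assms])

theorem proposition1:
  fixes W :: "'a::finite \<Rightarrow> 'b::finite \<Rightarrow> 'c::finite \<Rightarrow> real"
  assumes "is_channel W"
  shows "R_sup (qmatch W) W = R_bin (qmatch W) W \<and> R_bin (qmatch W) W = R_match W"
proof -
  have sup: "(\<Union>PX\<in>{PX. is_pmf2 PX}. Rsup_tilde (qmatch W) (joint PX W)) = R_match W"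
    unfolding R_match_eq_Union using Rsup_tilde_qmatch_eq[OF _ assms] by simp
  have bin: "(\<Union>PX\<in>{PX. is_pmf2 PX}. Rbin_star (qmatch W) (joint PX W)) = R_match W"
    unfolding R_match_eq_Union using Rbin_star_qmatch_eq[OF _ assms] by simp
  have "convex hull R_match W = R_match W"
    using convex_R_match[OF assms] by (simp add: convex_hull_eq)
  hence "closure (convex hull R_match W) = R_match W"
    using closed_R_match[OF assms] by simp
  thus ?thesis unfolding R_sup_def R_bin_def sup bin by simp
qed

end
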